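(* Assume $\mathbf a,\mathbf b\in\Delta^n$ with strictly positive entries. Then the problem $\min_{X\in\mathbb{R}^{n\times n}_+}f(X)$ admits an optimal solution $X_f$ such that $$\|X_f\mathbf 1_n-\mathbf a\|_1+\|X_f^\top\mathbf 1_n-\mathbf b\|_1\le\frac{2n\|C\|_\infty}{\tau}.$$
   Context: Let $n\ge1$, $C\in\mathbb{R}^{n\times n}$ with nonnegative entries and $\|C\|_\infty=\max_{i,j}|C_{ij}|$; $\tau>0$; $\Delta^n=\{\mathbf x\in\mathbb{R}^n_+:\sum_i x_i=1\}$. For $\mathbf x\in\mathbb{R}^n_+$ and $\mathbf y$ with positive entries, $\mathbf{KL}(\mathbf x\|\mathbf y)=\sum_i x_i\log(x_i/y_i)-x_i+y_i$ (with $0\log0=0$). $\mathbf 1_n$ is the all-ones vector. $f(X)=\langle C,X\rangle+\tau\mathbf{KL}(X\mathbf 1_n\|\mathbf a)+\tau\mathbf{KL}(X^\top\mathbf 1_n\|\mathbf b)$ for $X\in\mathbb{R}^{n\times n}_+$. *)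

theory Defs
  imports "HOL-Analysis.Analysis"
begin

definition KL :: "real^'n \<Rightarrow> real^'n \<Rightarrow> real" where
  "KL x y = (\<Sum>i\<in>UNIV. (if x$i = 0 then 0 else x$i * ln (x$i / y$i)) - x$i + y$i)"

definition ones :: "real^'n" where "ones = (\<chi> i. 1)"

definition nonneg_mat :: "real^'n^'m \<Rightarrow> bool" where
  "nonneg_mat X \<longleftrightarrow> (\<forall>i j. X$i$j \<ge> 0)"

definition in_simplex :: "real^'n \<Rightarrow> bool" where
  "in_simplex x \<longleftrightarrow> (\<forall>i. x$i \<ge> 0) \<and> (\<Sum>i\<in>UNIV. x$i) = 1"

definition frob :: "real^'n^'m \<Rightarrow> real^'n^'m \<Rightarrow> real" where
  "frob C X = (\<Sum>i\<in>UNIV. \<Sum>j\<in>UNIV. C$i$j * X$i$j)"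

definition max_norm :: "real^'n^'m \<Rightarrow> real" where
  "max_norm C = Max {\<bar>C$i$j\<bar> | i j. True}"

definition l1 :: "real^'n \<Rightarrow> real" where
  "l1 x = (\<Sum>i\<in>UNIV. \<bar>x$i\<bar>)"

definition UOT_obj :: "real^'n^'n \<Rightarrow> real \<Rightarrow> real^'n \<Rightarrow> real^'n \<Rightarrow> real^'n^'n \<Rightarrow> real" where
  "UOT_obj C \<tau> a b X = frob C X + \<tau> * KL (X *v ones) a + \<tau> * KL (transpose X *v ones) b"

end

theory Submission
  imports Defs "HOL-Real_Asymp.Real_Asymp"
begin

text \<open>
  The objective is continuous on nonnegative matrices and grows at least like
  \<open>2\<tau>(m + 1 - e)\<close> in the total mass \<open>m\<close>, so it attains its minimum at some \<open>X\<close>.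
  Moving a single entry of \<open>X\<close> by \<open>t\<close> and using convexity of \<open>x log x\<close> shows that the
  row sums \<open>r\<close> and column sums \<open>c\<close> of \<open>X\<close> are positive and that, with
  \<open>u\<^sub>i = log (r\<^sub>i / a\<^sub>i)\<close> and \<open>v\<^sub>j = log (c\<^sub>j / b\<^sub>j)\<close>,
  \<open>C\<^sub>i\<^sub>j + \<tau> (u\<^sub>i + v\<^sub>j) \<ge> 0\<close>, with equality wherever \<open>X\<^sub>i\<^sub>j > 0\<close>.
  Summing \<open>X\<^sub>i\<^sub>j\<close> times these equalities and using \<open>x log (x / y) \<ge> x - y\<close> gives \<open>m \<le> 1\<close>.
  With \<open>K = \<parallel>C\<parallel>\<^sub>\<infinity> / \<tau>\<close> and \<open>w = min\<^sub>j v\<^sub>j\<close> the dual inequality gives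
  \<open>u\<^sub>i \<ge> -(K + w)\<close> and \<open>v\<^sub>j \<ge> w\<close>, hence \<open>a\<^sub>i - r\<^sub>i \<le> a\<^sub>i (K + w)\<close> and
  \<open>b\<^sub>j - c\<^sub>j \<le> - b\<^sub>j w\<close>. As \<open>m \<le> 1\<close>, the excess of \<open>r\<close> over \<open>a\<close> is at most its deficit, and
  so \<open>\<parallel>r - a\<parallel>\<^sub>1 + \<parallel>c - b\<parallel>\<^sub>1 \<le> 2K\<close>, which is even sharper than the bound \<open>2nK\<close>.
\<close>

section \<open>Entropy terms\<close>

definition kl_scalar :: "real \<Rightarrow> real \<Rightarrow> real" where
  "kl_scalar x y = (if x = 0 then 0 else x * ln (x / y)) - x + y"

lemma KL_eq_sum_kl_scalar: "KL x y = (\<Sum>i\<in>UNIV. kl_scalar (x$i) (y$i))"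
  by (simp add: KL_def kl_scalar_def)

lemma kl_scalar_ge_tangent:
  assumes "y > 0" "z > 0" "x \<ge> 0"
  shows "kl_scalar x y \<ge> kl_scalar z y + ln (z / y) * (x - z)"
proof (cases "x = 0")
  case True
  then show ?thesis using assms by (simp add: kl_scalar_def algebra_simps)
next
  case False
  with assms have x: "x > 0" by simp
  have "x * ln (z / x) \<le> x * (z / x - 1)"
    using ln_le_minus_one[of "z / x"] x assms by (intro mult_left_mono) auto
  moreover have "ln (z / x) = ln (z / y) - ln (x / y)"
    using x assms by (simp add: ln_div)
  ultimately show ?thesis using x assms by (simp add: kl_scalar_def algebra_simps)
qed

lemma kl_scalar_ge_linear: "y > 0 \<Longrightarrow> x \<ge> 0 \<Longrightarrow> kl_scalar x y \<ge> x + y - exp 1 * y"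
  using kl_scalar_ge_tangent[of y "exp 1 * y" x] by (simp add: kl_scalar_def algebra_simps)

lemma mult_ln_div_ge: "x > 0 \<Longrightarrow> y > 0 \<Longrightarrow> x * ln (x / y) \<ge> x - (y::real)"
  using kl_scalar_ge_tangent[of y y x] by (simp add: kl_scalar_def)

lemma continuous_on_kl_scalar:
  assumes "y > 0" shows "continuous_on {0..} (\<lambda>x. kl_scalar x y)"
proof -
  have "continuous_on {0..} (\<lambda>x. x * ln (x / y))"
    unfolding continuous_on_eq_continuous_within
  proof
    fix x :: real assume x: "x \<in> {0..}"
    show "continuous (at x within {0..}) (\<lambda>x. x * ln (x / y))"
    proof (cases "x = 0")
      case True
      have "((\<lambda>x. x * ln (x / y)) \<longlongrightarrow> 0) (at_right 0)" using assms by real_asymp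
      then show ?thesis using True unfolding continuous_within by (simp add: at_within_Ici_at_right)
    next
      case False
      with x assms have "isCont (\<lambda>x. x * ln (x / y)) x" by (intro continuous_intros) auto
      then show ?thesis by (rule continuous_at_imp_continuous_at_within)
    qed
  qed
  moreover have "kl_scalar x y = x * ln (x / y) - x + y" for x by (simp add: kl_scalar_def)
  ultimately show ?thesis by (simp add: continuous_on_diff continuous_on_add continuous_on_id)
qed

lemma row_sum: "(X *v ones) $ i = (\<Sum>j\<in>UNIV. X$i$j)"
  by (simp add: matrix_vector_mult_def ones_def)

lemma col_sum: "(transpose X *v ones) $ j = (\<Sum>i\<in>UNIV. X$i$j)"
  by (simp add: matrix_vector_mult_def ones_def transpose_def)

lemma row_sum_nonneg: "nonneg_mat X \<Longrightarrow> (X *v ones) $ i \<ge> 0"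
  unfolding row_sum nonneg_mat_def by (simp add: sum_nonneg)

lemma col_sum_nonneg: "nonneg_mat X \<Longrightarrow> (transpose X *v ones) $ j \<ge> 0"
  unfolding col_sum nonneg_mat_def by (simp add: sum_nonneg)

lemma entry_le_row_sum: "nonneg_mat X \<Longrightarrow> X$i$j \<le> (X *v ones) $ i"
  unfolding row_sum nonneg_mat_def by (rule member_le_sum) auto

lemma entry_le_col_sum: "nonneg_mat X \<Longrightarrow> X$i$j \<le> (transpose X *v ones) $ j"
  unfolding col_sum nonneg_mat_def by (rule member_le_sum[where f = "\<lambda>i. X$i$j"]) auto

lemma sum_col_sums: "(\<Sum>j\<in>UNIV. (transpose X *v ones) $ j) = (\<Sum>i\<in>UNIV. (X *v ones) $ i)"
  unfolding col_sum unfolding row_sum by (rule sum.swap)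

lemma frob_nonneg: "nonneg_mat C \<Longrightarrow> nonneg_mat X \<Longrightarrow> frob C X \<ge> 0"
  unfolding frob_def nonneg_mat_def by (intro sum_nonneg mult_nonneg_nonneg) auto

lemma abs_le_max_norm: "\<bar>C$i$j\<bar> \<le> max_norm (C :: real^'n^'m)"
proof -
  have "{\<bar>C$i$j\<bar> | i j. True} = (\<lambda>(i, j). \<bar>C$i$j\<bar>) ` UNIV" by auto
  then have "finite {\<bar>C$i$j\<bar> | i j. True}" by simp
  then show ?thesis unfolding max_norm_def by (rule Max_ge) blast
qed

section \<open>Existence of a minimiser\<close>

lemma KL_ge_linear:
  assumes "\<forall>i. x$i \<ge> 0" "\<forall>i. y$i > 0" "in_simplex y"
  shows "KL x y \<ge> (\<Sum>i\<in>UNIV. x$i) + 1 - exp 1"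
proof -
  have "KL x y \<ge> (\<Sum>i\<in>UNIV. x$i + y$i - exp 1 * y$i)"
    unfolding KL_eq_sum_kl_scalar using assms by (intro sum_mono kl_scalar_ge_linear) auto
  also have "(\<Sum>i\<in>UNIV. x$i + y$i - exp 1 * y$i) = (\<Sum>i\<in>UNIV. x$i) + 1 - exp 1"
    using assms(3) by (simp add: in_simplex_def sum.distrib sum_subtractf sum_distrib_left[symmetric])
  finally show ?thesis .
qed

lemma UOT_obj_ge_mass:
  assumes "nonneg_mat C" "nonneg_mat Y" "\<tau> > 0"
    and "in_simplex a" "in_simplex b" "\<forall>i. a$i > 0" "\<forall>i. b$i > 0"
  shows "UOT_obj C \<tau> a b Y \<ge> 2 * \<tau> * ((\<Sum>i\<in>UNIV. (Y *v ones) $ i) + 1 - exp 1)"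
proof -
  let ?m = "(\<Sum>i\<in>UNIV. (Y *v ones) $ i)"
  have "KL (Y *v ones) a \<ge> ?m + 1 - exp 1"
    using assms by (intro KL_ge_linear) (auto simp: row_sum_nonneg)
  then have "\<tau> * KL (Y *v ones) a \<ge> \<tau> * (?m + 1 - exp 1)"
    using \<open>\<tau> > 0\<close> by simp
  moreover have "KL (transpose Y *v ones) b \<ge> ?m + 1 - exp 1"
    using KL_ge_linear[of "transpose Y *v ones" b] assms
    by (simp add: sum_col_sums col_sum_nonneg del: transpose_matrix_vector)
  then have "\<tau> * KL (transpose Y *v ones) b \<ge> \<tau> * (?m + 1 - exp 1)"
    using \<open>\<tau> > 0\<close> by simp
  ultimately show ?thesis
    using frob_nonneg[OF assms(1,2)] unfolding UOT_obj_def by (simp add: algebra_simps)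
qed

lemma UOT_obj_zero: "in_simplex a \<Longrightarrow> in_simplex b \<Longrightarrow> UOT_obj C \<tau> a b 0 = 2 * \<tau>"
  by (simp add: UOT_obj_def KL_eq_sum_kl_scalar kl_scalar_def frob_def in_simplex_def row_sum transpose_def)

lemma continuous_on_UOT_obj:
  assumes "\<forall>i. a$i > 0" "\<forall>i. b$i > 0"
  shows "continuous_on {X. nonneg_mat X} (UOT_obj C \<tau> a b)"
proof -
  have rows: "continuous_on S (\<lambda>X::real^'n^'m. (X *v ones) $ i)" for S i
    unfolding row_sum by (intro continuous_intros)
  have cols: "continuous_on S (\<lambda>X::real^'n^'m. (transpose X *v ones) $ j)" for S j
    unfolding col_sum by (intro continuous_intros)
  have "continuous_on {X. nonneg_mat X} (\<lambda>X. kl_scalar ((X *v ones) $ i) (a$i))" for i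
    using assms by (intro continuous_on_compose2[OF continuous_on_kl_scalar rows]) (auto simp: row_sum_nonneg)
  moreover have "continuous_on {X. nonneg_mat X} (\<lambda>X. kl_scalar ((transpose X *v ones) $ j) (b$j))" for j
    using assms by (intro continuous_on_compose2[OF continuous_on_kl_scalar cols]) (auto simp: col_sum_nonneg simp del: transpose_matrix_vector)
  ultimately show ?thesis
    unfolding UOT_obj_def[abs_def] KL_eq_sum_kl_scalar frob_def by (intro continuous_intros) auto
qed

lemma UOT_obj_has_minimizer:
  fixes C :: "real^'n^'n"
  assumes "nonneg_mat C" "\<tau> > 0"
    and "in_simplex a" "in_simplex b" "\<forall>i. a$i > 0" "\<forall>i. b$i > 0"
  obtains X where "nonneg_mat X" "\<forall>Y. nonneg_mat Y \<longrightarrow> UOT_obj C \<tau> a b X \<le> UOT_obj C \<tau> a b Y"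
proof -
  let ?mass = "\<lambda>X::real^'n^'n. \<Sum>i\<in>UNIV. (X *v ones) $ i"
  define S where "S = {X. nonneg_mat X \<and> ?mass X \<le> exp 1}"
  have "closed S"
  proof -
    have "S = (\<Inter>i j. {X. 0 \<le> X$i$j}) \<inter> {X. (\<Sum>i\<in>UNIV. \<Sum>j\<in>UNIV. X$i$j) \<le> exp 1}"
      unfolding S_def nonneg_mat_def row_sum by auto
    then show ?thesis
      by (auto intro!: closed_Int closed_INT closed_Collect_le continuous_intros)
  qed
  moreover have "bounded S"
    unfolding bounded_iff
  proof (intro exI ballI)
    fix X assume X: "X \<in> S"
    have "norm X \<le> (\<Sum>i\<in>UNIV. norm (X$i))" unfolding norm_vec_def by (rule L2_set_le_sum) simp
    also have "\<dots> \<le> (\<Sum>i\<in>UNIV. \<Sum>j\<in>UNIV. \<bar>X$i$j\<bar>)" by (intro sum_mono norm_le_l1_cart)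
    also have "\<dots> = ?mass X" using X unfolding S_def nonneg_mat_def row_sum by simp
    also have "\<dots> \<le> exp 1" using X unfolding S_def by simp
    finally show "norm X \<le> exp 1" .
  qed
  ultimately have "compact S" by (simp add: compact_eq_bounded_closed)
  moreover have "0 \<in> S" unfolding S_def nonneg_mat_def by (simp add: row_sum)
  moreover have "continuous_on S (UOT_obj C \<tau> a b)"
    using continuous_on_UOT_obj[OF assms(5,6)] by (rule continuous_on_subset) (auto simp: S_def)
  ultimately obtain X where X: "X \<in> S" "\<forall>Y\<in>S. UOT_obj C \<tau> a b X \<le> UOT_obj C \<tau> a b Y"
    using continuous_attains_inf by blast
  have "UOT_obj C \<tau> a b X \<le> UOT_obj C \<tau> a b Y" if "nonneg_mat Y" for Y
  proof (cases "Y \<in> S")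
    case False
    with that have "?mass Y > exp 1" by (auto simp: S_def)
    with \<open>\<tau> > 0\<close> have "UOT_obj C \<tau> a b 0 < 2 * \<tau> * (?mass Y + 1 - exp 1)"
      using UOT_obj_zero[OF assms(3,4)] by simp
    also have "\<dots> \<le> UOT_obj C \<tau> a b Y"
      using UOT_obj_ge_mass[OF assms(1) that assms(2-)] .
    finally have "UOT_obj C \<tau> a b 0 < UOT_obj C \<tau> a b Y" .
    with X \<open>0 \<in> S\<close> show ?thesis by fastforce
  qed (use X in blast)
  with X show thesis by (intro that) (auto simp: S_def)
qed

section \<open>First-order conditions at a minimiser\<close>

definition matrix_unit :: "'m \<Rightarrow> 'n \<Rightarrow> real^'n^'m" where
  "matrix_unit i j = (\<chi> k l. if k = i \<and> l = j then 1 else 0)"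

lemma matrix_unit_nth [simp]: "matrix_unit i j $ k $ l = (if k = i \<and> l = j then 1 else 0)"
  by (simp add: matrix_unit_def)

lemma KL_add_axis:
  "KL (x + t *\<^sub>R axis i 1) y = KL x y + (kl_scalar (x$i + t) (y$i) - kl_scalar (x$i) (y$i))"
proof -
  have "KL (x + t *\<^sub>R axis i 1) y
      = (\<Sum>k\<in>UNIV. kl_scalar (x$k) (y$k) + (if k = i then kl_scalar (x$i + t) (y$i) - kl_scalar (x$i) (y$i) else 0))"
    unfolding KL_eq_sum_kl_scalar by (intro sum.cong) (auto simp: axis_def)
  then show ?thesis by (simp add: sum.distrib KL_eq_sum_kl_scalar)
qed

lemma row_sums_add_matrix_unit:
  "(X + t *\<^sub>R matrix_unit i j) *v ones = X *v ones + t *\<^sub>R axis i 1"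
proof (rule vec_eq_iff[THEN iffD2], intro allI)
  fix k
  show "((X + t *\<^sub>R matrix_unit i j) *v ones) $ k = (X *v ones + t *\<^sub>R axis i 1) $ k"
    by (cases "k = i") (simp_all add: axis_def row_sum sum.distrib sum_distrib_left[symmetric])
qed

lemma col_sums_add_matrix_unit:
  "transpose (X + t *\<^sub>R matrix_unit i j) *v ones = transpose X *v ones + t *\<^sub>R axis j 1"
proof (rule vec_eq_iff[THEN iffD2], intro allI)
  fix l
  show "(transpose (X + t *\<^sub>R matrix_unit i j) *v ones) $ l = (transpose X *v ones + t *\<^sub>R axis j 1) $ l"
    by (cases "l = j") (simp_all add: axis_def col_sum sum.distrib sum_distrib_left[symmetric] del: transpose_matrix_vector)
qed

lemma frob_add_matrix_unit: "frob C (X + t *\<^sub>R matrix_unit i j) = frob C X + t * C$i$j"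
proof -
  have "C$k$l * (X + t *\<^sub>R matrix_unit i j)$k$l
      = C$k$l * X$k$l + (if l = j then if k = i then t * C$i$j else 0 else 0)" for k l
    by (auto simp: algebra_simps)
  then show ?thesis by (simp add: frob_def sum.distrib)
qed

lemma UOT_obj_add_matrix_unit:
  fixes X :: "real^'n^'n"
  shows "UOT_obj C \<tau> a b (X + t *\<^sub>R matrix_unit i j) = UOT_obj C \<tau> a b X + t * C$i$j
     + \<tau> * (kl_scalar ((X *v ones) $ i + t) (a$i) - kl_scalar ((X *v ones) $ i) (a$i))
     + \<tau> * (kl_scalar ((transpose X *v ones) $ j + t) (b$j) - kl_scalar ((transpose X *v ones) $ j) (b$j))"
  unfolding UOT_obj_def frob_add_matrix_unit row_sums_add_matrix_unit col_sums_add_matrix_unit KL_add_axis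
  by (simp add: algebra_simps)

text \<open>It is meaningful only where
  the row sum \<open>i\<close> and the column sum \<open>j\<close> are positive (\<open>ln 0 = 0\<close> in HOL).\<close>

definition UOT_grad :: "real^'n^'n \<Rightarrow> real \<Rightarrow> real^'n \<Rightarrow> real^'n \<Rightarrow> real^'n^'n \<Rightarrow> 'n \<Rightarrow> 'n \<Rightarrow> real" where
  "UOT_grad C \<tau> a b X i j =
     C$i$j + \<tau> * ln ((X *v ones) $ i / a$i) + \<tau> * ln ((transpose X *v ones) $ j / b$j)"

lemma UOT_grad_add_matrix_unit:
  "UOT_grad C \<tau> a b (X + t *\<^sub>R matrix_unit i j) i j =
     C$i$j + \<tau> * ln (((X *v ones) $ i + t) / a$i) + \<tau> * ln (((transpose X *v ones) $ j + t) / b$j)"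
  unfolding UOT_grad_def row_sums_add_matrix_unit col_sums_add_matrix_unit by (simp add: axis_def)

lemma UOT_obj_add_matrix_unit_le:
  fixes X :: "real^'n^'n" and i j :: 'n
  defines "r \<equiv> (X *v ones) $ i" and "c \<equiv> (transpose X *v ones) $ j"
  assumes "\<tau> \<ge> 0" "a$i > 0" "b$j > 0" "r \<ge> 0" "c \<ge> 0" "r + t > 0" "c + t > 0"
  shows "UOT_obj C \<tau> a b (X + t *\<^sub>R matrix_unit i j) - UOT_obj C \<tau> a b X
           \<le> t * UOT_grad C \<tau> a b (X + t *\<^sub>R matrix_unit i j) i j"
proof -
  have "kl_scalar (r + t) (a$i) - kl_scalar r (a$i) \<le> t * ln ((r + t) / a$i)"
    using kl_scalar_ge_tangent[of "a$i" "r + t" r] assms by (simp add: algebra_simps)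
  then have "\<tau> * (kl_scalar (r + t) (a$i) - kl_scalar r (a$i)) \<le> \<tau> * (t * ln ((r + t) / a$i))"
    using \<open>\<tau> \<ge> 0\<close> by (rule mult_left_mono)
  moreover have "kl_scalar (c + t) (b$j) - kl_scalar c (b$j) \<le> t * ln ((c + t) / b$j)"
    using kl_scalar_ge_tangent[of "b$j" "c + t" c] assms by (simp add: algebra_simps)
  then have "\<tau> * (kl_scalar (c + t) (b$j) - kl_scalar c (b$j)) \<le> \<tau> * (t * ln ((c + t) / b$j))"
    using \<open>\<tau> \<ge> 0\<close> by (rule mult_left_mono)
  ultimately show ?thesis
    unfolding UOT_obj_add_matrix_unit UOT_grad_add_matrix_unit r_def[symmetric] c_def[symmetric]
    by (simp add: algebra_simps)
qed

lemma tendsto_UOT_grad_add_matrix_unit: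
  assumes "(X *v ones) $ i > 0" "(transpose X *v ones) $ j > 0" "a$i > 0" "b$j > 0"
  shows "((\<lambda>t. UOT_grad C \<tau> a b (X + t *\<^sub>R matrix_unit i j) i j) \<longlongrightarrow> UOT_grad C \<tau> a b X i j) (at 0)"
  unfolding UOT_grad_add_matrix_unit unfolding UOT_grad_def using assms
  by (auto intro!: tendsto_eq_intros)

lemma exists_ln_sum_neg:
  fixes \<tau> a b c C :: real
  assumes "\<tau> > 0" "a > 0" "b > 0" "c \<ge> 0"
  obtains t where "t > 0" "C + \<tau> * ln (t / a) + \<tau> * ln ((c + t) / b) < 0"
proof -
  have "filterlim (\<lambda>t. C + \<tau> * ln (t / a) + \<tau> * ln ((c + t) / b)) at_bot (at_right 0)"
  proof (cases "c = 0")
    case True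
    with assms show ?thesis by simp real_asymp
  next
    case False
    with assms show ?thesis by real_asymp
  qed
  then have "\<forall>\<^sub>F t in at_right 0. t > 0 \<and> C + \<tau> * ln (t / a) + \<tau> * ln ((c + t) / b) < 0"
    by (intro eventually_conj eventually_at_right_less) (simp add: filterlim_at_bot_dense)
  then obtain t where "t > 0" "C + \<tau> * ln (t / a) + \<tau> * ln ((c + t) / b) < 0"
    using eventually_happens'[OF trivial_limit_at_right_real] by blast
  then show ?thesis by (rule that)
qed

context
  fixes C X :: "real^'n^'n" and a b :: "real^'n" and \<tau> :: real
  assumes tau_pos: "\<tau> > 0" and a_pos: "\<forall>i. a$i > 0" and b_pos: "\<forall>i. b$i > 0"
    and X_nonneg: "nonneg_mat X"
    and X_min: "\<forall>Y. nonneg_mat Y \<longrightarrow> UOT_obj C \<tau> a b X \<le> UOT_obj C \<tau> a b Y"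
begin

lemma minimizer_UOT_grad_sign:
  assumes "- X$i$j < t"
  shows "0 \<le> t * UOT_grad C \<tau> a b (X + t *\<^sub>R matrix_unit i j) i j"
proof -
  have "nonneg_mat (X + t *\<^sub>R matrix_unit i j)"
    using X_nonneg assms unfolding nonneg_mat_def by auto
  with X_min have "0 \<le> UOT_obj C \<tau> a b (X + t *\<^sub>R matrix_unit i j) - UOT_obj C \<tau> a b X"
    by auto
  also have "\<dots> \<le> t * UOT_grad C \<tau> a b (X + t *\<^sub>R matrix_unit i j) i j"
    using entry_le_row_sum[OF X_nonneg, of i j] entry_le_col_sum[OF X_nonneg, of i j] assms
    by (intro UOT_obj_add_matrix_unit_le)
       (use tau_pos a_pos b_pos row_sum_nonneg[OF X_nonneg] col_sum_nonneg[OF X_nonneg] in auto)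
  finally show ?thesis .
qed

lemma minimizer_UOT_grad_add_matrix_unit_nonneg:
  assumes "t > 0" shows "0 \<le> UOT_grad C \<tau> a b (X + t *\<^sub>R matrix_unit i j) i j"
proof -
  have "0 \<le> X$i$j" using X_nonneg unfolding nonneg_mat_def by simp
  with assms have "- X$i$j < t" by linarith
  from minimizer_UOT_grad_sign[OF this] assms show ?thesis by (simp add: zero_le_mult_iff)
qed

text \<open>An empty row would make the derivative in the direction of the diagonal matrix unit
  tend to \<open>-\<infinity>\<close> as that entry grows from \<open>0\<close>.\<close>

lemma minimizer_row_sum_pos: "(X *v ones) $ i > 0"
proof (rule ccontr)
  assume "\<not> (X *v ones) $ i > 0"
  then have "(X *v ones) $ i = 0" using row_sum_nonneg[OF X_nonneg, of i] by simp
  obtain t where t: "t > 0"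
    and "C$i$i + \<tau> * ln (t / a$i) + \<tau> * ln (((transpose X *v ones) $ i + t) / b$i) < 0"
    using exists_ln_sum_neg[OF tau_pos a_pos[rule_format] b_pos[rule_format] col_sum_nonneg[OF X_nonneg]] .
  moreover have "0 \<le> UOT_grad C \<tau> a b (X + t *\<^sub>R matrix_unit i i) i i"
    using minimizer_UOT_grad_add_matrix_unit_nonneg[OF t] .
  ultimately show False
    using \<open>(X *v ones) $ i = 0\<close> by (simp add: UOT_grad_add_matrix_unit)
qed

lemma minimizer_col_sum_pos: "(transpose X *v ones) $ j > 0"
proof (rule ccontr)
  assume "\<not> (transpose X *v ones) $ j > 0"
  then have "(transpose X *v ones) $ j = 0" using col_sum_nonneg[OF X_nonneg, of j] by simp
  obtain t where t: "t > 0"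
    and "C$j$j + \<tau> * ln (t / b$j) + \<tau> * ln (((X *v ones) $ j + t) / a$j) < 0"
    using exists_ln_sum_neg[OF tau_pos b_pos[rule_format] a_pos[rule_format] row_sum_nonneg[OF X_nonneg]] .
  moreover have "0 \<le> UOT_grad C \<tau> a b (X + t *\<^sub>R matrix_unit j j) j j"
    using minimizer_UOT_grad_add_matrix_unit_nonneg[OF t] .
  ultimately show False
    using \<open>(transpose X *v ones) $ j = 0\<close> by (simp add: UOT_grad_add_matrix_unit add_ac)
qed

lemma minimizer_tendsto_UOT_grad:
  "((\<lambda>t. UOT_grad C \<tau> a b (X + t *\<^sub>R matrix_unit i j) i j) \<longlongrightarrow> UOT_grad C \<tau> a b X i j) (at 0)"
  using minimizer_row_sum_pos minimizer_col_sum_pos a_pos b_pos by (intro tendsto_UOT_grad_add_matrix_unit) auto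

lemma minimizer_UOT_grad_nonneg: "UOT_grad C \<tau> a b X i j \<ge> 0"
proof (rule tendsto_lowerbound)
  show "((\<lambda>t. UOT_grad C \<tau> a b (X + t *\<^sub>R matrix_unit i j) i j) \<longlongrightarrow> UOT_grad C \<tau> a b X i j) (at_right 0)"
    using minimizer_tendsto_UOT_grad unfolding filterlim_at_split by blast
  show "\<forall>\<^sub>F t in at_right 0. 0 \<le> UOT_grad C \<tau> a b (X + t *\<^sub>R matrix_unit i j) i j"
    using eventually_at_right_less by (rule eventually_mono) (rule minimizer_UOT_grad_add_matrix_unit_nonneg)
qed simp

lemma minimizer_UOT_grad_nonpos:
  assumes "X$i$j > 0" shows "UOT_grad C \<tau> a b X i j \<le> 0"
proof (rule tendsto_upperbound)
  show "((\<lambda>t. UOT_grad C \<tau> a b (X + t *\<^sub>R matrix_unit i j) i j) \<longlongrightarrow> UOT_grad C \<tau> a b X i j) (at_left 0)"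
    using minimizer_tendsto_UOT_grad unfolding filterlim_at_split by blast
  have "\<forall>\<^sub>F t in at_left 0. t \<in> {- X$i$j<..<0}"
    using assms by (intro eventually_at_left_real) simp
  then show "\<forall>\<^sub>F t in at_left 0. UOT_grad C \<tau> a b (X + t *\<^sub>R matrix_unit i j) i j \<le> 0"
  proof (rule eventually_mono)
    fix t assume "t \<in> {- X$i$j<..<0}"
    with minimizer_UOT_grad_sign[of i j t] show "UOT_grad C \<tau> a b (X + t *\<^sub>R matrix_unit i j) i j \<le> 0"
      by (simp add: zero_le_mult_iff)
  qed
qed simp

end

section \<open>Marginal deviation bound\<close>

lemma sum_row_sums_le_one_of_KKT:
  fixes X C :: "real^'n^'n"
  assumes "nonneg_mat C" "nonneg_mat X" "\<tau> > 0" "in_simplex a" "in_simplex b"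
    and "\<forall>i. a$i > 0" "\<forall>i. b$i > 0"
    and "\<forall>i. (X *v ones) $ i > 0" "\<forall>j. (transpose X *v ones) $ j > 0"
    and dual: "\<forall>i j. UOT_grad C \<tau> a b X i j \<ge> 0"
    and slack: "\<forall>i j. X$i$j > 0 \<longrightarrow> UOT_grad C \<tau> a b X i j \<le> 0"
  shows "(\<Sum>i\<in>UNIV. (X *v ones) $ i) \<le> 1"
proof -
  define r where "r i = (X *v ones) $ i" for i
  define c where "c j = (transpose X *v ones) $ j" for j
  define m where "m = (\<Sum>i\<in>UNIV. r i)"
  have complementary: "X$i$j * UOT_grad C \<tau> a b X i j = 0" for i j
  proof (cases "X$i$j > 0")
    case True
    with dual slack show ?thesis by (simp add: order_antisym)
  next
    case False
    with \<open>nonneg_mat X\<close> show ?thesis unfolding nonneg_mat_def by (metis order.not_eq_order_implies_strict mult_zero_left)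
  qed
  have "0 = (\<Sum>i\<in>UNIV. \<Sum>j\<in>UNIV. X$i$j * UOT_grad C \<tau> a b X i j)"
    unfolding complementary by simp
  also have "\<dots> = frob C X + \<tau> * (\<Sum>i\<in>UNIV. r i * ln (r i / a$i)) + \<tau> * (\<Sum>j\<in>UNIV. c j * ln (c j / b$j))"
  proof -
    have "X$i$j * UOT_grad C \<tau> a b X i j
        = C$i$j * X$i$j + \<tau> * (X$i$j * ln (r i / a$i)) + \<tau> * (X$i$j * ln (c j / b$j))" for i j
      by (simp add: UOT_grad_def r_def c_def algebra_simps)
    moreover have "(\<Sum>i\<in>UNIV. \<Sum>j\<in>UNIV. X$i$j * ln (r i / a$i)) = (\<Sum>i\<in>UNIV. r i * ln (r i / a$i))"
      unfolding r_def row_sum by (simp add: sum_distrib_right)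
    moreover have "(\<Sum>i\<in>UNIV. \<Sum>j\<in>UNIV. X$i$j * ln (c j / b$j)) = (\<Sum>j\<in>UNIV. c j * ln (c j / b$j))"
      unfolding c_def col_sum by (subst sum.swap) (simp add: sum_distrib_right)
    ultimately show ?thesis
      by (simp add: frob_def sum.distrib sum_distrib_left[symmetric])
  qed
  also have "\<dots> \<ge> 0 + \<tau> * (m - 1) + \<tau> * (m - 1)"
  proof -
    have "(\<Sum>i\<in>UNIV. r i * ln (r i / a$i)) \<ge> (\<Sum>i\<in>UNIV. r i - a$i)"
      using assms unfolding r_def by (intro sum_mono mult_ln_div_ge) auto
    moreover have "(\<Sum>i\<in>UNIV. r i - a$i) = m - 1"
      using \<open>in_simplex a\<close> by (simp add: m_def in_simplex_def sum_subtractf)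
    moreover have "(\<Sum>j\<in>UNIV. c j * ln (c j / b$j)) \<ge> (\<Sum>j\<in>UNIV. c j - b$j)"
      using assms unfolding c_def by (intro sum_mono mult_ln_div_ge) auto
    moreover have "(\<Sum>j\<in>UNIV. c j - b$j) = m - 1"
      using \<open>in_simplex b\<close> sum_col_sums[of X]
      by (simp add: m_def r_def c_def in_simplex_def sum_subtractf del: transpose_matrix_vector)
    ultimately show ?thesis
      using frob_nonneg[OF assms(1,2)] \<open>\<tau> > 0\<close> by (intro add_mono mult_left_mono) auto
  qed
  finally show ?thesis using \<open>\<tau> > 0\<close> unfolding m_def r_def by (simp add: mult_le_0_iff)
qed

lemma l1_diff_le_of_ln_div_ge:
  assumes "in_simplex a" "\<forall>i. a$i > 0" "\<forall>i. r$i > 0"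
    and ln_ge: "\<forall>i. ln (r$i / a$i) \<ge> - p" and mass: "(\<Sum>i\<in>UNIV. r$i) \<le> 1"
  shows "l1 (r - a) \<le> 2 * p + ((\<Sum>i\<in>UNIV. r$i) - 1)"
proof -
  have deficit: "a$i - r$i \<le> a$i * p" for i
  proof -
    have "1 - p \<le> exp (- p)" using exp_ge_add_one_self[of "- p"] by simp
    also have "\<dots> \<le> r$i / a$i" using ln_ge assms by (subst ln_ge_iff[symmetric]) auto
    finally have "a$i * (1 - p) \<le> a$i * (r$i / a$i)"
      using assms by (intro mult_left_mono) (auto simp: less_imp_le)
    then show ?thesis using assms(2)[rule_format, of i] by (simp add: algebra_simps)
  qed
  have sum_a: "(\<Sum>i\<in>UNIV. a$i) = 1" using assms unfolding in_simplex_def by simp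
  have "1 - (\<Sum>i\<in>UNIV. r$i) \<le> p"
    using sum_mono[of UNIV "\<lambda>i. a$i - r$i" "\<lambda>i. a$i * p", OF deficit]
    by (simp add: sum_subtractf sum_distrib_right[symmetric] sum_a)
  with mass have "p \<ge> 0" by simp
  have "\<bar>r$i - a$i\<bar> \<le> 2 * (a$i * p) + (r$i - a$i)" for i
    using deficit[of i] mult_nonneg_nonneg[OF less_imp_le[OF assms(2)[rule_format, of i]] \<open>p \<ge> 0\<close>]
    by linarith
  then have "l1 (r - a) \<le> (\<Sum>i\<in>UNIV. 2 * (a$i * p) + (r$i - a$i))"
    unfolding l1_def by (intro sum_mono) simp
  also have "\<dots> = 2 * p + ((\<Sum>i\<in>UNIV. r$i) - 1)"
    by (simp add: sum.distrib sum_subtractf sum_distrib_left[symmetric] sum_distrib_right[symmetric] sum_a)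
  finally show ?thesis .
qed

lemma l1_marginals_le_of_KKT:
  fixes X C :: "real^'n^'n"
  assumes "nonneg_mat C" "nonneg_mat X" "\<tau> > 0" "in_simplex a" "in_simplex b"
    and "\<forall>i. a$i > 0" "\<forall>i. b$i > 0"
    and "\<forall>i. (X *v ones) $ i > 0" "\<forall>j. (transpose X *v ones) $ j > 0"
    and dual: "\<forall>i j. UOT_grad C \<tau> a b X i j \<ge> 0"
    and slack: "\<forall>i j. X$i$j > 0 \<longrightarrow> UOT_grad C \<tau> a b X i j \<le> 0"
  shows "l1 (X *v ones - a) + l1 (transpose X *v ones - b) \<le> 2 * max_norm C / \<tau>"
proof -
  define K where "K = max_norm C / \<tau>"
  define u where "u i = ln ((X *v ones) $ i / a$i)" for i
  define v where "v j = ln ((transpose X *v ones) $ j / b$j)" for j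
  define v_min where "v_min = Min (range v)"
  have uv: "u i + v j \<ge> - K" for i j
  proof -
    have "C$i$j \<le> max_norm C" using abs_le_max_norm[of C i j] by simp
    moreover have "0 \<le> C$i$j + \<tau> * (u i + v j)"
      using dual unfolding UOT_grad_def u_def v_def by (simp add: distrib_left add.assoc)
    ultimately have "\<tau> * (u i + v j) \<ge> - max_norm C" by linarith
    with \<open>\<tau> > 0\<close> show ?thesis unfolding K_def by (simp add: field_simps)
  qed
  have "v_min \<in> range v" unfolding v_min_def by (rule Min_in) auto
  then obtain j0 where "v_min = v j0" by blast
  then have row_ln: "u i \<ge> - (K + v_min)" for i
    using uv[of i j0] by simp
  have col_ln: "v j \<ge> v_min" for j
    unfolding v_min_def by (rule Min_le) auto
  have mass: "(\<Sum>i\<in>UNIV. (X *v ones) $ i) \<le> 1"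
    by (rule sum_row_sums_le_one_of_KKT) (use assms in auto)
  have "l1 (X *v ones - a) \<le> 2 * (K + v_min) + ((\<Sum>i\<in>UNIV. (X *v ones) $ i) - 1)"
    using assms row_ln mass unfolding u_def by (intro l1_diff_le_of_ln_div_ge) auto
  moreover have "l1 (transpose X *v ones - b) \<le> 2 * (- v_min) + ((\<Sum>i\<in>UNIV. (X *v ones) $ i) - 1)"
    using l1_diff_le_of_ln_div_ge[of b "transpose X *v ones" "- v_min"] assms col_ln mass sum_col_sums[of X]
    unfolding v_def by (simp del: transpose_matrix_vector)
  ultimately show ?thesis using mass unfolding K_def by simp
qed

theorem theorem2:
  fixes C :: "real^'n^'n" and a b :: "real^'n" and \<tau> :: real
  assumes "nonneg_mat C" and "\<tau> > 0"
    and "in_simplex a" and "in_simplex b"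
    and "\<forall>i. a$i > 0" and "\<forall>i. b$i > 0"
  shows "\<exists>Xf. nonneg_mat Xf
           \<and> (\<forall>Y. nonneg_mat Y \<longrightarrow> UOT_obj C \<tau> a b Xf \<le> UOT_obj C \<tau> a b Y)
           \<and> l1 (Xf *v ones - a) + l1 (transpose Xf *v ones - b)
               \<le> 2 * real CARD('n) * max_norm C / \<tau>"
proof -
  obtain X where X: "nonneg_mat X" and min: "\<forall>Y. nonneg_mat Y \<longrightarrow> UOT_obj C \<tau> a b X \<le> UOT_obj C \<tau> a b Y"
    using UOT_obj_has_minimizer[OF assms] .
  note KKT = minimizer_row_sum_pos minimizer_col_sum_pos minimizer_UOT_grad_nonneg minimizer_UOT_grad_nonpos
  have "l1 (X *v ones - a) + l1 (transpose X *v ones - b) \<le> 2 * max_norm C / \<tau>"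
    using assms X KKT[OF \<open>\<tau> > 0\<close> assms(5,6) X min] by (intro l1_marginals_le_of_KKT) auto
  also have "\<dots> \<le> 2 * real CARD('n) * max_norm C / \<tau>"
    using order_trans[OF abs_ge_zero abs_le_max_norm] \<open>\<tau> > 0\<close>
    by (intro divide_right_mono mult_right_mono) auto
  finally show ?thesis using X min by blast
qed

end
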